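(* Let $s\ge2$ and constants $0<a<b$. Let $r(t)$, $t\ge0$, be a differentiable function with $$\dot r\ge a r^{s-1}-br^{2s-1},$$ with $r_0>0$ and $r_t\le1$ for all $t$. Let $k=a/b$ and $T=\inf\{t\ge0:r_t\ge k^2\}$. Then $$T\le\frac1{bk^2}\Big(\frac{2k}{r_0^{s-1}}+\log\frac1{1-k}\Big).$$ *)

theory Defs
  imports "HOL-Analysis.Analysis"
begin

end

(* Write k = a/b, P = r^(s-1) and c = r0^-(s-1). The differential inequality reads
   r' >= b P (k - P r). While r stays below k^2 this forces r' > 0, so r >= r0 and
   hence 1/c <= P <= 1. With these bounds the potential
   Phi(u) = (c - 1) u / k - ln (k - u) satisfies (Phi o r)' = r' Phi'(r) >= b, so before
   r reaches k^2 we have b t <= Phi(r t) - Phi(r0) <= k (c - 1) + ln (1 / (1 - k)),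
   which is less than b times the claimed bound. *)

theory Submission
  imports Defs
begin

lemma ge_initial_value_if_deriv_pos:
  fixes f f' :: "real \<Rightarrow> real" and a b x :: real
  assumes cont: "continuous_on {a..b} f"
    and deriv: "\<And>y. a \<le> y \<Longrightarrow> y < b \<Longrightarrow> f a \<le> f y \<Longrightarrow>
      (f has_real_derivative f' y) (at_right y)"
    and pos: "\<And>y. a \<le> y \<Longrightarrow> y < b \<Longrightarrow> f a \<le> f y \<Longrightarrow> 0 < f' y"
    and x: "a \<le> x" "x \<le> b"
  shows "f a \<le> f x"
proof (rule ccontr)
  assume "\<not> f a \<le> f x"
  then have fx: "f x < f a" by simp
  define S where "S = {z \<in> {a..x}. f a \<le> f z}"
  define y where "y = Sup S"
  have "closed S"
    unfolding S_def using continuous_on_subset[OF cont] x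
    by (intro continuous_on_closed_Collect_le continuous_on_const) auto
  moreover have "a \<in> S" and bdd: "bdd_above S"
    using x by (auto simp: S_def intro: bdd_aboveI[of _ x])
  ultimately have "y \<in> S"
    unfolding y_def by (intro closed_contains_Sup) auto
  then have ay: "a \<le> y" and fy: "f a \<le> f y" and yx: "y < x"
    using fx by (auto simp: S_def order.order_iff_strict)
  have "((\<lambda>z. (f z - f y) / (z - y)) \<longlongrightarrow> f' y) (at_right y)"
    using deriv[OF ay _ fy] yx x by (simp add: has_field_derivative_iff)
  then have "\<forall>\<^sub>F z in at_right y. 0 < (f z - f y) / (z - y)"
    using pos[OF ay _ fy] yx x by (intro order_tendstoD) auto
  then obtain e where e: "y < e" "\<And>z. y < z \<Longrightarrow> z < e \<Longrightarrow> 0 < (f z - f y) / (z - y)"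
    unfolding eventually_at_right_field by blast
  define z where "z = (y + min e x) / 2"
  have z: "y < z" "z < e" "z < x"
    using e yx by (auto simp: z_def)
  then have "f y < f z"
    using e(2)[of z] by (simp add: zero_less_divide_iff)
  then have "z \<in> S"
    using z ay fy by (auto simp: S_def)
  then show False
    using cSup_upper[OF _ bdd] z by (fastforce simp: y_def)
qed

definition potential :: "real \<Rightarrow> real \<Rightarrow> real \<Rightarrow> real" where
  "potential k c u = (c - 1) / k * u - ln (k - u)"

lemma has_real_derivative_potential:
  assumes "0 < k" "u < k"
  shows "(potential k c has_real_derivative (c - 1) / k + 1 / (k - u)) (at u)"
  unfolding potential_def[abs_def] using assms by (auto intro!: derivative_eq_intros)

lemma growth_times_potential_slope_ge:
  fixes b c k u v P :: real
  assumes "0 \<le> b" "0 < u" "u < k" "0 < P" "P \<le> 1" "1 \<le> P * c"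
    and growth: "b * P * (k - P * u) \<le> v"
  shows "b \<le> v * ((c - 1) / k + 1 / (k - u))"
proof -
  have k: "0 < k" using assms by simp
  have Pu: "P * u \<le> u" using assms by (simp add: mult_left_le_one_le)
  have "1 \<le> c"
  proof (rule ccontr)
    assume "\<not> 1 \<le> c"
    then have "P * c < P * 1" using assms by (intro mult_strict_left_mono) auto
    then show False using assms by linarith
  qed
  then have slope: "0 \<le> (c - 1) / k + 1 / (k - u)" using assms by simp
  have "(k - P * u) / k \<le> (P * c) * ((k - P * u) / k)"
    using mult_right_mono[of 1 "P * c" "(k - P * u) / k"] assms Pu k by simp
  moreover have "P * u / k \<le> (P * u) * ((k - P * u) / (k - u)) / k"
  proof -
    have "1 \<le> (k - P * u) / (k - u)" using assms Pu by (simp add: le_divide_eq)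
    then have "P * u * 1 \<le> P * u * ((k - P * u) / (k - u))"
      using assms by (intro mult_left_mono) auto
    from divide_right_mono[OF this, of k] k show ?thesis by simp
  qed
  moreover have "(k - P * u) / k + P * u / k = 1" using k by (simp add: field_simps)
  moreover have "P * (k - P * u) * ((c - 1) / k + 1 / (k - u))
      = (P * c) * ((k - P * u) / k) + (P * u) * ((k - P * u) / (k - u)) / k"
    using assms k by (simp add: field_simps)
  ultimately have "1 \<le> P * (k - P * u) * ((c - 1) / k + 1 / (k - u))" by linarith
  then have "b \<le> b * P * (k - P * u) * ((c - 1) / k + 1 / (k - u))"
    using assms by (simp add: mult_le_cancel_left1 mult.assoc)
  also have "\<dots> \<le> v * ((c - 1) / k + 1 / (k - u))"
    using growth slope by (rule mult_right_mono)
  finally show ?thesis .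
qed

lemma potential_increment_le:
  fixes c k u0 u1 :: real
  assumes "0 < k" "k < 1" "1 \<le> c" "0 < u0" "u0 \<le> u1" "u1 \<le> k\<^sup>2"
  shows "potential k c u1 - potential k c u0 \<le> k * (c - 1) + ln (1 / (1 - k))"
proof -
  have kk: "k\<^sup>2 < k" using assms by (simp add: power2_eq_square)
  have "(c - 1) / k * (u1 - u0) \<le> (c - 1) / k * k\<^sup>2"
    using assms by (intro mult_left_mono) auto
  also have "\<dots> = k * (c - 1)" using assms by (simp add: power2_eq_square)
  finally have lin: "(c - 1) / k * (u1 - u0) \<le> k * (c - 1)" .
  have "ln (k - u0) \<le> ln k" using assms kk by simp
  moreover have "ln (k * (1 - k)) \<le> ln (k - u1)"
    using assms kk by (intro ln_mono) (auto simp: power2_eq_square algebra_simps)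
  ultimately have "ln (k - u0) - ln (k - u1) \<le> ln (1 / (1 - k))"
    using assms by (simp add: ln_mult ln_div)
  moreover have "potential k c u1 - potential k c u0
      = (c - 1) / k * (u1 - u0) + (ln (k - u0) - ln (k - u1))"
    using assms by (simp add: potential_def field_simps)
  ultimately show ?thesis using lin by linarith
qed

lemma time_le_potential_increment:
  fixes f f' p :: "real \<Rightarrow> real" and b c k T :: real
  assumes "0 \<le> T" "0 \<le> b"
    and cont: "continuous_on {0..T} f"
    and deriv: "\<And>x. 0 < x \<Longrightarrow> x < T \<Longrightarrow> (f has_real_derivative f' x) (at x)"
    and below: "\<And>x. 0 \<le> x \<Longrightarrow> x \<le> T \<Longrightarrow> f x < k"
    and pos: "\<And>x. 0 < x \<Longrightarrow> x < T \<Longrightarrow> 0 < f x \<and> 0 < p x \<and> p x \<le> 1 \<and> 1 \<le> p x * c"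
    and growth: "\<And>x. 0 < x \<Longrightarrow> x < T \<Longrightarrow> b * p x * (k - p x * f x) \<le> f' x"
  shows "b * T \<le> potential k c (f T) - potential k c (f 0)"
proof -
  have "potential k c (f 0) - b * 0 \<le> potential k c (f T) - b * T"
  proof (rule DERIV_nonneg_imp_increasing_open[OF \<open>0 \<le> T\<close>])
    fix x assume x: "0 < x" "x < T"
    have fx: "f x < k" using below x by simp
    have k: "0 < k" using pos[OF x] fx by linarith
    have "((\<lambda>t. potential k c (f t)) has_real_derivative
        ((c - 1) / k + 1 / (k - f x)) * f' x) (at x)"
      using has_real_derivative_potential[OF k fx] deriv[OF x] by (rule DERIV_chain2)
    then have "((\<lambda>t. potential k c (f t) - b * t) has_real_derivative
        ((c - 1) / k + 1 / (k - f x)) * f' x - b * 1) (at x)"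
      by (intro DERIV_diff DERIV_cmult DERIV_ident)
    moreover have "b \<le> f' x * ((c - 1) / k + 1 / (k - f x))"
      using pos[OF x] growth[OF x] fx \<open>0 \<le> b\<close> by (intro growth_times_potential_slope_ge) auto
    ultimately show "\<exists>y. ((\<lambda>t. potential k c (f t) - b * t) has_real_derivative y) (at x) \<and> 0 \<le> y"
      by (auto simp: mult.commute)
  next
    show "continuous_on {0..T} (\<lambda>t. potential k c (f t) - b * t)"
      unfolding potential_def using cont below by (intro continuous_intros) force+
  qed
  then show ?thesis by simp
qed

lemma reaches_level_within:
  fixes r r' :: "real \<Rightarrow> real" and s b k T :: real
  assumes s: "1 \<le> s" and k: "0 < k" "k < 1" and b: "0 < b"
    and deriv: "\<And>t. 0 \<le> t \<Longrightarrow> (r has_real_derivative r' t) (at t within {0..})"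
    and ineq: "\<And>t. 0 \<le> t \<Longrightarrow> b * k * r t powr (s - 1) - b * r t powr (2 * s - 1) \<le> r' t"
    and r0: "0 < r 0" and le1: "\<And>t. 0 \<le> t \<Longrightarrow> r t \<le> 1"
    and T: "k * (1 / r 0 powr (s - 1) - 1) + ln (1 / (1 - k)) < b * T"
  shows "\<exists>t\<in>{0..T}. k\<^sup>2 \<le> r t"
proof (rule ccontr)
  define c where "c = 1 / r 0 powr (s - 1)"
  define p where "p t = r t powr (s - 1)" for t
  assume "\<not> ?thesis"
  then have below: "r t < k\<^sup>2" if "0 \<le> t" "t \<le> T" for t
    using that by force
  have kk: "k\<^sup>2 < k" using k by (simp add: power2_eq_square)
  have below_k: "r t < k" if "0 \<le> t" "t \<le> T" for t
    using below[OF that] kk by linarith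
  have c: "1 \<le> c"
    using r0 le1[of 0] s by (simp add: c_def powr_le1)
  have "0 \<le> k * (c - 1) + ln (1 / (1 - k))"
    using k c by simp
  then have "0 < b * T"
    using T by (simp add: c_def)
  then have "0 \<le> T"
    using b by (simp add: zero_less_mult_iff)
  have growth: "b * p t * (k - p t * r t) \<le> r' t" if "0 \<le> t" "0 < r t" for t
  proof -
    have "r t powr (2 * s - 1) = r t powr ((s - 1) + (s - 1) + 1)" by simp
    also have "\<dots> = p t * p t * r t" unfolding powr_add using that by (simp add: p_def)
    finally show ?thesis using ineq[OF that(1)] by (simp add: p_def algebra_simps)
  qed
  have p_bounds: "0 < p t \<and> p t \<le> 1" if "0 \<le> t" "0 < r t" for t
    using that le1[OF that(1)] s by (auto simp: p_def powr_le1)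
  have cont: "continuous_on {0..T} r"
    using DERIV_continuous_on[OF deriv] by (rule continuous_on_subset) auto
  have above_r0: "r 0 \<le> r t" if "0 \<le> t" "t \<le> T" for t
  proof (rule ge_initial_value_if_deriv_pos[OF cont _ _ that])
    fix y assume y: "0 \<le> y" "y < T" "r 0 \<le> r y"
    show "(r has_real_derivative r' y) (at_right y)"
      using deriv[of y] y by (auto intro: has_field_derivative_subset)
    have ry: "0 < r y" using r0 y by linarith
    have "p y * r y \<le> r y"
      using p_bounds[OF y(1) ry] ry by (intro mult_left_le_one_le) auto
    then have "0 < b * p y * (k - p y * r y)"
      using p_bounds[OF y(1) ry] below_k[of y] y b by simp
    then show "0 < r' y"
      using growth[OF y(1) ry] by linarith
  qed
  have "b * T \<le> potential k c (r T) - potential k c (r 0)"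
  proof (rule time_le_potential_increment[OF \<open>0 \<le> T\<close> _ cont])
    fix x assume x: "0 < x" "x < T"
    have "at x within {0..} = at x"
      using x by (intro at_within_interior) simp
    then show "(r has_real_derivative r' x) (at x)"
      using deriv[of x] x by simp
    have rx: "0 < r x" using above_r0[of x] x r0 by simp
    have "r 0 powr (s - 1) \<le> p x"
      unfolding p_def using above_r0[of x] x r0 s by (intro powr_mono2) auto
    then show "0 < r x \<and> 0 < p x \<and> p x \<le> 1 \<and> 1 \<le> p x * c"
      using rx p_bounds[of x] x r0 by (simp add: c_def le_divide_eq)
    show "b * p x * (k - p x * r x) \<le> r' x"
      using growth[of x] x rx by simp
  qed (use b below_k in auto)
  also have "\<dots> \<le> k * (c - 1) + ln (1 / (1 - k))"
    using k c r0 above_r0[of T] below[of T] \<open>0 \<le> T\<close>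
    by (intro potential_increment_le) auto
  finally show False
    using T by (simp add: c_def)
qed

theorem lemmaH2:
  fixes s a b :: real and r r' :: "real \<Rightarrow> real"
  assumes s2: "s \<ge> 2"
    and ab: "0 < a" "a < b"
    and deriv: "\<And>t. t \<ge> 0 \<Longrightarrow> (r has_real_derivative r' t) (at t within {0..})"
    and ineq: "\<And>t. t \<ge> 0 \<Longrightarrow> r' t \<ge> a * r t powr (s - 1) - b * r t powr (2 * s - 1)"
    and r0: "r 0 > 0"
    and le1: "\<And>t. t \<ge> 0 \<Longrightarrow> r t \<le> 1"
  shows "(\<exists>t\<ge>0. r t \<ge> (a / b)^2) \<and>
         Inf {t. t \<ge> 0 \<and> r t \<ge> (a / b)^2}
           \<le> 1 / (b * (a / b)^2) * (2 * (a / b) / r 0 powr (s - 1) + ln (1 / (1 - a / b)))"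
proof -
  define k where "k = a / b"
  define c where "c = 1 / r 0 powr (s - 1)"
  define L where "L = ln (1 / (1 - k))"
  define T where "T = 1 / (b * k\<^sup>2) * (2 * k * c + L)"
  have b: "0 < b" and k: "0 < k" "k < 1" and c: "0 < c" and L: "0 \<le> L"
    using ab r0 by (auto simp: k_def c_def L_def)
  have "k * (c - 1) + L < 2 * k * c + L"
    using k c by (simp add: algebra_simps add_pos_pos)
  also have "\<dots> \<le> (2 * k * c + L) / k\<^sup>2"
    using k c L by (simp add: le_divide_eq)
      (intro mult_right_le_one_le, auto simp: power_le_one)
  also have "\<dots> = b * T"
    using b by (simp add: T_def)
  finally have "\<exists>t\<in>{0..T}. k\<^sup>2 \<le> r t"
    using ineq b s2 by (intro reaches_level_within[OF _ k b deriv _ r0 le1])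
      (auto simp: c_def L_def k_def)
  then obtain t where t: "0 \<le> t" "t \<le> T" "k\<^sup>2 \<le> r t"
    by auto
  have "Inf {t. 0 \<le> t \<and> k\<^sup>2 \<le> r t} \<le> t"
    using t by (intro cInf_lower bdd_belowI[of _ 0]) auto
  with t show ?thesis
    by (auto simp: T_def k_def c_def L_def)
qed

end
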